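(* Let $G$ be the graph defined in the context. For every edge $e\in E(G)$, the graph obtained from $G$ by deleting $e$ contains an induced subgraph isomorphic to $P_6$.
   Context: $P_n$ denotes the path on $n$ vertices. Let $\mathbb{F}=\mathbb{F}_2[\alpha]/(\alpha^4+\alpha+1)$ be the field with 16 elements. Let $S=\{x^3: x\in\mathbb{F}^\times\}=\{1,\alpha^3,\alpha^2+\alpha^3,\alpha+\alpha^3,1+\alpha+\alpha^2+\alpha^3\}$ be the set of nonzero cubes. Let $G$ be the graph with vertex set $\mathbb{F}$ in which distinct $x,y$ are adjacent if and only if $x-y\in S$. *)

theory Defs
  imports "HOL-Computational_Algebra.Polynomial" "HOL-Library.Z2"
begin

text \<open>The field F = F_2[alpha]/(alpha^4+alpha+1), realised by canonical representatives:
  polynomials over F_2 (type bit) of degree < 4, with multiplication modulo the modulus.\<close>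

definition gf_mod :: "bit poly" where
  "gf_mod = [:1, 1, 0, 0, 1:]"

definition GF16 :: "bit poly set" where
  "GF16 = {p. degree p < 4}"

definition gf_mult :: "bit poly \<Rightarrow> bit poly \<Rightarrow> bit poly" where
  "gf_mult p q = (p * q) mod gf_mod"

definition cubes :: "bit poly set" where
  "cubes = {gf_mult x (gf_mult x x) | x. x \<in> GF16 \<and> x \<noteq> 0}"

definition G_adj :: "bit poly \<Rightarrow> bit poly \<Rightarrow> bool" where
  "G_adj x y \<longleftrightarrow> x \<in> GF16 \<and> y \<in> GF16 \<and> x \<noteq> y \<and> x - y \<in> cubes"

definition path_adj :: "nat \<Rightarrow> nat \<Rightarrow> bool" where
  "path_adj i j \<longleftrightarrow> i = j + 1 \<or> j = i + 1"

definition has_induced_path :: "'a set \<Rightarrow> ('a \<Rightarrow> 'a \<Rightarrow> bool) \<Rightarrow> nat \<Rightarrow> bool" where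
  "has_induced_path V E n \<longleftrightarrow>
     (\<exists>f. inj_on f {..<n} \<and> f ` {..<n} \<subseteq> V \<and>
          (\<forall>i<n. \<forall>j<n. E (f i) (f j) \<longleftrightarrow> path_adj i j))"

end

theory Submission
  imports Defs
begin

text \<open>The maps \<open>u \<mapsto> t + s u\<close> with \<open>s \<in> S\<close> are automorphisms of \<open>G\<close>: translations
  because \<open>G\<close> is a Cayley graph of \<open>(\<bbbF>, +)\<close>, scalings because \<open>S\<close> is a multiplicative
  subgroup of \<open>\<bbbF>\<^sup>\<times>\<close>. They act transitively on the edges, since \<open>u \<mapsto> y + (x - y) u\<close>
  sends the edge \<open>{0, 1}\<close> to \<open>{x, y}\<close>. Hence it suffices to exhibit a single induced
  \<open>P\<^sub>6\<close> in \<open>G\<close> minus the edge \<open>{0, 1}\<close>, namely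
  \<open>0, \<alpha>\<^sup>3, \<alpha>, 1 + \<alpha>, 1 + \<alpha> + \<alpha>\<^sup>3, 1\<close>.\<close>

definition induced_embedding ::
    "'a set \<Rightarrow> ('a \<Rightarrow> 'a \<Rightarrow> bool) \<Rightarrow> 'b set \<Rightarrow> ('b \<Rightarrow> 'b \<Rightarrow> bool) \<Rightarrow> ('a \<Rightarrow> 'b) \<Rightarrow> bool" where
  "induced_embedding V E V' E' \<phi> \<longleftrightarrow>
     inj_on \<phi> V \<and> \<phi> ` V \<subseteq> V' \<and> (\<forall>u\<in>V. \<forall>v\<in>V. E' (\<phi> u) (\<phi> v) \<longleftrightarrow> E u v)"

lemma has_induced_path_induced_embedding:
  assumes "induced_embedding V E V' E' \<phi>" and "has_induced_path V E n"
  shows "has_induced_path V' E' n"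
proof -
  from assms(2) obtain f where inj: "inj_on f {..<n}" and sub: "f ` {..<n} \<subseteq> V"
    and adj: "\<forall>i<n. \<forall>j<n. E (f i) (f j) \<longleftrightarrow> path_adj i j"
    unfolding has_induced_path_def by blast
  have "inj_on (\<phi> \<circ> f) {..<n}"
    using assms(1) inj sub by (auto simp: induced_embedding_def intro: comp_inj_on inj_on_subset)
  moreover have "(\<phi> \<circ> f) ` {..<n} \<subseteq> V'"
    using assms(1) sub by (auto simp: induced_embedding_def)
  moreover have "\<forall>i<n. \<forall>j<n. E' ((\<phi> \<circ> f) i) ((\<phi> \<circ> f) j) \<longleftrightarrow> path_adj i j"
    using assms(1) sub adj by (auto simp: induced_embedding_def image_subset_iff)
  ultimately show ?thesis
    unfolding has_induced_path_def by blast
qed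

lemma induced_embedding_comp:
  assumes "induced_embedding V E V' E' \<phi>" and "induced_embedding V' E' V'' E'' \<psi>"
  shows "induced_embedding V E V'' E'' (\<psi> \<circ> \<phi>)"
  using assms unfolding induced_embedding_def
  by (auto simp: image_subset_iff intro: comp_inj_on inj_on_subset)

lemma induced_embedding_delete_edge:
  assumes emb: "induced_embedding V E V' E' \<phi>" and "x \<in> V" "y \<in> V"
  shows "induced_embedding V (\<lambda>u v. E u v \<and> {u, v} \<noteq> {x, y})
                           V' (\<lambda>u v. E' u v \<and> {u, v} \<noteq> {\<phi> x, \<phi> y}) \<phi>"
proof -
  have "{\<phi> u, \<phi> v} = {\<phi> x, \<phi> y} \<longleftrightarrow> {u, v} = {x, y}" if "u \<in> V" "v \<in> V" for u v
  proof -
    have "inj_on \<phi> V" using emb by (simp add: induced_embedding_def)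
    then have "\<phi> ` {u, v} = \<phi> ` {x, y} \<longleftrightarrow> {u, v} = {x, y}"
      using that \<open>x \<in> V\<close> \<open>y \<in> V\<close> by (intro inj_on_image_eq_iff) auto
    then show ?thesis by simp
  qed
  then show ?thesis
    using emb unfolding induced_embedding_def by auto
qed

definition gf16_list :: "bit poly list" where
  "gf16_list = [[:a, b, c, d:]. a \<leftarrow> [0, 1], b \<leftarrow> [0, 1], c \<leftarrow> [0, 1], d \<leftarrow> [0, 1]]"

definition cube_list :: "bit poly list" where
  "cube_list = [[:1:], [:0, 0, 0, 1:], [:0, 0, 1, 1:], [:0, 1, 0, 1:], [:1, 1, 1, 1:]]"

lemma degree_less_4_eq_pCons:
  assumes "degree (p :: 'a :: zero poly) < 4"
  shows "p = [:coeff p 0, coeff p 1, coeff p 2, coeff p 3:]"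
proof (rule poly_eqI)
  fix n
  show "coeff p n = coeff [:coeff p 0, coeff p 1, coeff p 2, coeff p 3:] n"
  proof (cases "n < 4")
    case True
    then have "n = 0 \<or> n = 1 \<or> n = 2 \<or> n = 3" by auto
    then show ?thesis by (auto simp: coeff_pCons numeral_eq_Suc)
  next
    case False
    with assms show ?thesis
      by (simp add: coeff_eq_0 coeff_pCons numeral_eq_Suc split: nat.split)
  qed
qed

lemma GF16_eq: "GF16 = set gf16_list"
proof
  show "GF16 \<subseteq> set gf16_list"
  proof
    fix p assume "p \<in> GF16"
    then have "p = [:coeff p 0, coeff p 1, coeff p 2, coeff p 3:]"
      by (intro degree_less_4_eq_pCons) (simp add: GF16_def)
    moreover have "[:a, b, c, d:] \<in> set gf16_list" for a b c d :: bit
      by (cases a; cases b; cases c; cases d) (simp_all add: gf16_list_def)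
    ultimately show "p \<in> set gf16_list" by metis
  qed
  show "set gf16_list \<subseteq> GF16"
    by (auto simp: gf16_list_def GF16_def)
qed

lemma cubes_eq: "cubes = set cube_list"
proof -
  have "cubes = (\<lambda>x. gf_mult x (gf_mult x x)) ` {x \<in> set gf16_list. x \<noteq> 0}"
    unfolding cubes_def GF16_eq by auto
  also have "\<dots> = set cube_list"
    unfolding gf16_list_def cube_list_def gf_mult_def gf_mod_def by code_simp
  finally show ?thesis .
qed

lemma gf_mult_in_GF16: "gf_mult p q \<in> GF16"
  using degree_mod_less[of gf_mod "p * q"] by (auto simp: GF16_def gf_mult_def gf_mod_def)

lemma GF16_add: "p \<in> GF16 \<Longrightarrow> q \<in> GF16 \<Longrightarrow> p + q \<in> GF16"
  using degree_add_le_max[of p q] by (auto simp: GF16_def)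

lemma GF16_diff: "p \<in> GF16 \<Longrightarrow> q \<in> GF16 \<Longrightarrow> p - q \<in> GF16"
  using degree_diff_le_max[of p q] by (auto simp: GF16_def)

lemma GF16_mod_gf_mod: "p \<in> GF16 \<Longrightarrow> p mod gf_mod = p"
  by (rule mod_poly_less) (simp add: GF16_def gf_mod_def)

lemma gf_mult_one: "p \<in> GF16 \<Longrightarrow> gf_mult p 1 = p"
  by (simp add: gf_mult_def GF16_mod_gf_mod)

lemma gf_mult_diff_right: "gf_mult c u - gf_mult c v = gf_mult c (u - v)"
proof -
  have "gf_mult c u - gf_mult c v = (gf_mult c u - gf_mult c v) mod gf_mod"
    by (simp add: GF16_mod_gf_mod GF16_diff gf_mult_in_GF16)
  also have "\<dots> = (c * u - c * v) mod gf_mod"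
    unfolding gf_mult_def by (rule mod_diff_eq)
  finally show ?thesis
    by (simp add: gf_mult_def right_diff_distrib)
qed

text \<open>\<open>S\<close> is a subgroup of \<open>\<bbbF>\<^sup>\<times>\<close> and \<open>\<bbbF>\<close> has no zero divisors; both are checked by evaluation.\<close>

lemma cube_scaling_table:
  "\<forall>c\<in>set cube_list. \<forall>z\<in>set gf16_list.
     (gf_mult c z \<in> set cube_list \<longleftrightarrow> z \<in> set cube_list) \<and> (gf_mult c z = 0 \<longleftrightarrow> z = 0)"
  unfolding gf16_list_def cube_list_def gf_mult_def gf_mod_def by code_simp

lemma gf_mult_cube_in_cubes_iff:
  "c \<in> cubes \<Longrightarrow> z \<in> GF16 \<Longrightarrow> gf_mult c z \<in> cubes \<longleftrightarrow> z \<in> cubes"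
  using cube_scaling_table by (simp add: cubes_eq GF16_eq)

lemma gf_mult_cube_eq_0_iff:
  "c \<in> cubes \<Longrightarrow> z \<in> GF16 \<Longrightarrow> gf_mult c z = 0 \<longleftrightarrow> z = 0"
  using cube_scaling_table by (simp add: cubes_eq GF16_eq)

lemma translation_induced_embedding:
  "induced_embedding GF16 G_adj GF16 G_adj (\<lambda>u. t + u)" if "t \<in> GF16"
  using that by (auto simp: induced_embedding_def G_adj_def GF16_add)

lemma scaling_induced_embedding:
  "induced_embedding GF16 G_adj GF16 G_adj (gf_mult c)" if c: "c \<in> cubes"
proof -
  have eq_iff: "gf_mult c u = gf_mult c v \<longleftrightarrow> u = v" if "u \<in> GF16" "v \<in> GF16" for u v
    using gf_mult_cube_eq_0_iff[OF c GF16_diff[OF that]] gf_mult_diff_right[of c u v] by auto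
  have "G_adj (gf_mult c u) (gf_mult c v) \<longleftrightarrow> G_adj u v" if "u \<in> GF16" "v \<in> GF16" for u v
    using that eq_iff gf_mult_cube_in_cubes_iff[OF c GF16_diff[OF that]]
    by (simp add: G_adj_def gf_mult_in_GF16 gf_mult_diff_right)
  then show ?thesis
    using eq_iff gf_mult_in_GF16 by (auto simp: induced_embedding_def inj_on_def)
qed

lemma induced_P6_avoiding_edge_0_1:
  "has_induced_path GF16 (\<lambda>u v. G_adj u v \<and> {u, v} \<noteq> {0, 1}) 6"
proof -
  define path :: "bit poly list"
    where "path = [0, [:0, 0, 0, 1:], [:0, 1:], [:1, 1:], [:1, 1, 0, 1:], [:1:]]"
  have "distinct path" "length path = 6" "set path \<subseteq> GF16"
    by (simp_all add: path_def GF16_def)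
  then have inj: "inj_on (nth path) {..<6}" and img: "nth path ` {..<6} \<subseteq> GF16"
    by (auto simp: inj_on_nth)
  have "\<forall>i\<in>set [0..<6]. \<forall>j\<in>set [0..<6].
      (G_adj (path ! i) (path ! j) \<and> {path ! i, path ! j} \<noteq> {0, 1}) \<longleftrightarrow> path_adj i j"
    unfolding G_adj_def GF16_eq cubes_eq path_def path_adj_def gf16_list_def cube_list_def
    by code_simp
  then have adj: "(G_adj (path ! i) (path ! j) \<and> {path ! i, path ! j} \<noteq> {0, 1}) \<longleftrightarrow> path_adj i j"
    if "i < 6" "j < 6" for i j
    using that by simp
  show ?thesis
    unfolding has_induced_path_def
    by (intro exI[of _ "nth path"] conjI allI impI inj img adj)
qed

theorem claim3:
  shows "\<forall>x y. G_adj x y \<longrightarrow>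
           has_induced_path GF16 (\<lambda>u v. G_adj u v \<and> {u, v} \<noteq> {x, y}) 6"
proof (intro allI impI)
  fix x y assume "G_adj x y"
  then have x: "x \<in> GF16" and y: "y \<in> GF16" and s: "x - y \<in> cubes"
    by (auto simp: G_adj_def)
  define \<psi> where "\<psi> = (\<lambda>u. y + u) \<circ> gf_mult (x - y)"
  have "induced_embedding GF16 G_adj GF16 G_adj \<psi>"
    unfolding \<psi>_def
    using scaling_induced_embedding[OF s] translation_induced_embedding[OF y]
    by (rule induced_embedding_comp)
  then have "induced_embedding GF16 (\<lambda>u v. G_adj u v \<and> {u, v} \<noteq> {0, 1})
               GF16 (\<lambda>u v. G_adj u v \<and> {u, v} \<noteq> {\<psi> 0, \<psi> 1}) \<psi>"
    by (rule induced_embedding_delete_edge) (simp_all add: GF16_def)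
  moreover have "\<psi> 0 = y"
    by (simp add: \<psi>_def gf_mult_def)
  moreover have "\<psi> 1 = x"
    using x y by (simp add: \<psi>_def gf_mult_one GF16_diff)
  ultimately have "induced_embedding GF16 (\<lambda>u v. G_adj u v \<and> {u, v} \<noteq> {0, 1})
                     GF16 (\<lambda>u v. G_adj u v \<and> {u, v} \<noteq> {x, y}) \<psi>"
    by (simp add: insert_commute)
  from has_induced_path_induced_embedding[OF this induced_P6_avoiding_edge_0_1]
  show "has_induced_path GF16 (\<lambda>u v. G_adj u v \<and> {u, v} \<noteq> {x, y}) 6" .
qed

end
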